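(* Let $K$ and $L$ be $n$-element finite sets, $M=K\times L$, and let $u=(u_{kl})$ be a unitary matrix indexed by $K\times L$ all of whose entries are nonzero. Let $E\subset F(M)$ be the subspace of functions of the form $f_{kl}=a_k+b_l$ for some functions $a\in F(K)$, $b\in F(L)$ (so $\dim E=2n-1$). Then $I_uf=f$ for every $f\in E$. Consequently the multiplicity of the eigenvalue $1$ in the spectrum of the Berezin transform $I_u$ is at least $2n-1$.
   Context: For a finite set $J$, $F(J)$ denotes the space of complex-valued functions on $J$. For $f=(f_{kl})\in F(M)$, $C_uf$ and $D_uf$ are the operators on $F(K)$ with matrices $x_{kk'}=\sum_{l\in L}u_{kl}f_{kl}\bar u_{k'l}$ and $y_{kk'}=\sum_{l\in L}u_{kl}f_{k'l}\bar u_{k'l}$ respectively; these maps $F(M)\to\operatorname{End}F(K)$ are linear bijections. The Berezin transform is $I_u:=C_u^{-1}D_u:F(M)\to F(M)$; explicitly $(I_uf)_{kl}=\sum_{k'\in K,l'\in L}\frac{u_{kl'}u_{k'l}}{u_{kl}u_{k'l'}}f_{k'l'}|u_{k'l'}|^2$. *)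

theory Defs
  imports "HOL-Analysis.Analysis"
begin

definition unitary_KL :: "complex^'l^'k \<Rightarrow> bool" where
  "unitary_KL u \<longleftrightarrow>
     (\<forall>k k'. (\<Sum>l\<in>UNIV. u$k$l * cnj (u$k'$l)) = (if k = k' then 1 else 0)) \<and>
     (\<forall>l l'. (\<Sum>k\<in>UNIV. cnj (u$k$l) * u$k$l') = (if l = l' then 1 else 0))"

definition berezin :: "complex^'l^'k \<Rightarrow> complex^('k \<times> 'l) \<Rightarrow> complex^('k \<times> 'l)" where
  "berezin u f = (\<chi> m. case m of (k, l) \<Rightarrow> \<Sum>k'\<in>UNIV. \<Sum>l'\<in>UNIV.
      (u$k$l' * u$k'$l) / (u$k$l * u$k'$l') * f$(k', l') * (complex_of_real (cmod (u$k'$l')))\<^sup>2)"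

definition sum_space :: "(complex^('k::finite \<times> 'l::finite)) set" where
  "sum_space = {f. \<exists>a b. \<forall>k l. f$(k, l) = a k + b l}"

end

theory Submission
  imports Defs
begin

text \<open>Since |u_k'l'|^2 = u_k'l' * cnj u_k'l', the entry u_k'l' cancels from the kernel of the
  Berezin transform, leaving (I_u f)_kl = u_kl^-1 * sum_{k',l'} u_kl' * cnj u_k'l' * u_k'l * f_k'l'.
  For f_kl = a_k the sum over l' is an entry of u u^* = 1, for f_kl = b_l the sum over k' is an
  entry of u^* u = 1; either way only the diagonal term survives and returns f_kl.
  For the dimension bound, E contains functions whose restrictions to the 2n - 1 points of a cross
  {k0} x L \<union> K x {l0} are the delta functions of its points, hence 2n - 1 independent ones.\<close>

lemma berezin_nth:
  fixes u :: "complex^'l::finite^'k::finite"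
  assumes "\<forall>k l. u$k$l \<noteq> 0"
  shows "berezin u f $ (k, l) =
    (\<Sum>k'\<in>UNIV. \<Sum>l'\<in>UNIV. u$k$l' * cnj (u$k'$l') * u$k'$l * f$(k', l')) / u$k$l"
proof -
  have "(u$k$l' * u$k'$l) / (u$k$l * u$k'$l') * f$(k', l') * (complex_of_real (cmod (u$k'$l')))\<^sup>2
      = u$k$l' * cnj (u$k'$l') * u$k'$l * f$(k', l') / u$k$l" for k' l'
    using assms by (simp add: complex_norm_square[symmetric] power2_eq_square field_simps)
  then show ?thesis
    by (simp add: berezin_def sum_divide_distrib)
qed

lemma berezin_add: "berezin u (f + g) = berezin u f + berezin u g"
  by (simp add: berezin_def vec_eq_iff distrib_left distrib_right sum.distrib split: prod.split)

lemma berezin_fixes_row_function: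
  fixes u :: "complex^'l::finite^'k::finite"
  assumes "unitary_KL u" and "\<forall>k l. u$k$l \<noteq> 0"
  shows "berezin u (\<chi> m. a (fst m)) = (\<chi> m. a (fst m))"
proof -
  have "berezin u (\<chi> m. a (fst m)) $ (k, l) = a k" for k l
  proof -
    have "(\<Sum>k'\<in>UNIV. \<Sum>l'\<in>UNIV. u$k$l' * cnj (u$k'$l') * u$k'$l * a k')
        = (\<Sum>k'\<in>UNIV. (\<Sum>l'\<in>UNIV. u$k$l' * cnj (u$k'$l')) * (u$k'$l * a k'))"
      by (simp add: sum_distrib_right mult.assoc)
    also have "\<dots> = u$k$l * a k"
    proof -
      have rows_orthonormal: "(\<Sum>l'\<in>UNIV. u$k$l' * cnj (u$k'$l')) = (if k = k' then 1 else 0)" for k'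
        using assms(1) unfolding unitary_KL_def by blast
      show ?thesis
        by (simp add: rows_orthonormal if_distrib[where f = "\<lambda>x. x * _"] cong: if_cong)
    qed
    finally show ?thesis
      using assms(2) by (simp add: berezin_nth)
  qed
  then show ?thesis
    by (simp add: vec_eq_iff)
qed

lemma berezin_fixes_column_function:
  fixes u :: "complex^'l::finite^'k::finite"
  assumes "unitary_KL u" and "\<forall>k l. u$k$l \<noteq> 0"
  shows "berezin u (\<chi> m. b (snd m)) = (\<chi> m. b (snd m))"
proof -
  have "berezin u (\<chi> m. b (snd m)) $ (k, l) = b l" for k l
  proof -
    have "(\<Sum>k'\<in>UNIV. \<Sum>l'\<in>UNIV. u$k$l' * cnj (u$k'$l') * u$k'$l * b l')
        = (\<Sum>l'\<in>UNIV. \<Sum>k'\<in>UNIV. u$k$l' * b l' * (cnj (u$k'$l') * u$k'$l))"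
      by (subst sum.swap) (simp add: ac_simps)
    also have "\<dots> = (\<Sum>l'\<in>UNIV. (\<Sum>k'\<in>UNIV. cnj (u$k'$l') * u$k'$l) * (u$k$l' * b l'))"
      by (simp add: sum_distrib_left sum_distrib_right ac_simps)
    also have "\<dots> = u$k$l * b l"
    proof -
      have columns_orthonormal: "(\<Sum>k'\<in>UNIV. cnj (u$k'$l') * u$k'$l) = (if l' = l then 1 else 0)" for l'
        using assms(1) unfolding unitary_KL_def by blast
      show ?thesis
        by (simp add: columns_orthonormal if_distrib[where f = "\<lambda>x. x * _"] cong: if_cong)
    qed
    finally show ?thesis
      using assms(2) by (simp add: berezin_nth)
  qed
  then show ?thesis
    by (simp add: vec_eq_iff)
qed

lemma berezin_fixes_sum_space:
  fixes u :: "complex^'l::finite^'k::finite"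
  assumes "unitary_KL u" and "\<forall>k l. u$k$l \<noteq> 0" and "f \<in> sum_space"
  shows "berezin u f = f"
proof -
  obtain a b where "\<forall>k l. f$(k, l) = a k + b l"
    using assms(3) by (auto simp: sum_space_def)
  then have "f = (\<chi> m. a (fst m)) + (\<chi> m. b (snd m))"
    by (simp add: vec_eq_iff)
  then show ?thesis
    using assms(1,2) by (simp add: berezin_add berezin_fixes_row_function berezin_fixes_column_function)
qed

lemma card_le_dim_of_dual_family:
  fixes S :: "('a::field^'n::finite) set"
  assumes "\<forall>c\<in>C. F c \<in> S" and "\<forall>c\<in>C. \<forall>c'\<in>C. F c $ c' = (if c = c' then 1 else 0)"
  shows "card C \<le> vec.dim S"
proof -
  have inj: "inj_on F C"
    by (rule inj_onI) (metis assms(2) one_neq_zero)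
  have "vec.independent (F ` C)"
    unfolding vec.independent_explicit
  proof (intro conjI allI impI ballI)
    show "finite (F ` C)" by simp
    fix w v assume sum0: "(\<Sum>x\<in>F ` C. w x *s x) = 0" and "v \<in> F ` C"
    then obtain c where c: "c \<in> C" "v = F c" by blast
    have "0 = (\<Sum>x\<in>F ` C. w x *s x) $ c"
      using sum0 by simp
    also have "\<dots> = (\<Sum>d\<in>C. w (F d) * F d $ c)"
      by (simp add: sum_component sum.reindex[OF inj])
    also have "\<dots> = (\<Sum>d\<in>C. if d = c then w (F d) else 0)"
      using c(1) assms(2) by (intro sum.cong) auto
    also have "\<dots> = w v"
      using c by simp
    finally show "w v = 0" by simp
  qed
  then have "card (F ` C) \<le> vec.dim S"
    using assms(1) by (intro vec.independent_card_le_dim) auto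
  with inj show ?thesis
    by (simp add: card_image)
qed

lemma card_cross:
  "card ({k\<^sub>0} \<times> (UNIV :: 'l::finite set) \<union> (UNIV :: 'k::finite set) \<times> {l\<^sub>0})
     = CARD('k) + CARD('l) - 1"
proof -
  have "card ({k\<^sub>0} \<times> (UNIV :: 'l set) \<union> (UNIV :: 'k set) \<times> {l\<^sub>0}) + card {(k\<^sub>0, l\<^sub>0)}
      = card ({k\<^sub>0} \<times> (UNIV :: 'l set)) + card ((UNIV :: 'k set) \<times> {l\<^sub>0})"
  proof -
    have "{k\<^sub>0} \<times> (UNIV :: 'l set) \<inter> (UNIV :: 'k set) \<times> {l\<^sub>0} = {(k\<^sub>0, l\<^sub>0)}"
      by auto
    then show ?thesis
      using card_Un_Int[of "{k\<^sub>0} \<times> (UNIV :: 'l set)" "(UNIV :: 'k set) \<times> {l\<^sub>0}"] by simp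
  qed
  then show ?thesis
    by (simp add: card_cartesian_product)
qed

lemma dim_sum_space_ge:
  "CARD('k::finite) + CARD('l::finite) - 1 \<le> vec.dim (sum_space :: (complex^('k \<times> 'l)) set)"
proof -
  fix k\<^sub>0 :: 'k and l\<^sub>0 :: 'l
  define C where "C = {k\<^sub>0} \<times> (UNIV :: 'l set) \<union> (UNIV :: 'k set) \<times> {l\<^sub>0}"
  define F :: "'k \<times> 'l \<Rightarrow> complex^('k \<times> 'l)" where
    "F = (\<lambda>(k, l). \<chi> m. (if fst m = k \<and> l = l\<^sub>0 then 1 else 0)
           + ((if snd m = l \<and> k = k\<^sub>0 then 1 else 0) - (if k = k\<^sub>0 \<and> l = l\<^sub>0 then 1 else 0)))"
  have "F (k, l) \<in> sum_space" for k l
    unfolding sum_space_def F_def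
    by (intro CollectI exI[of _ "\<lambda>k'. if k' = k \<and> l = l\<^sub>0 then 1 else 0"]
        exI[of _ "\<lambda>l'. (if l' = l \<and> k = k\<^sub>0 then 1 else 0) - (if k = k\<^sub>0 \<and> l = l\<^sub>0 then 1 else 0)"]) simp
  moreover have "\<forall>c\<in>C. \<forall>c'\<in>C. F c $ c' = (if c = c' then 1 else 0)"
    by (auto simp: F_def C_def split: if_splits)
  ultimately have "card C \<le> vec.dim (sum_space :: (complex^('k \<times> 'l)) set)"
    by (intro card_le_dim_of_dual_family) auto
  then show ?thesis
    by (simp add: C_def card_cross)
qed

theorem lemma2p5:
  fixes u :: "complex^'l::finite^'k::finite"
  assumes "CARD('k) = CARD('l)"
    and "unitary_KL u"
    and "\<forall>k l. u$k$l \<noteq> 0"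
  shows "(\<forall>f\<in>sum_space. berezin u f = f) \<and>
         vec.dim {f :: complex^('k \<times> 'l). berezin u f = f} \<ge> 2 * CARD('k) - 1"
proof
  show fixes_E: "\<forall>f\<in>sum_space. berezin u f = f"
    using assms(2,3) berezin_fixes_sum_space by blast
  have "2 * CARD('k) - 1 \<le> vec.dim (sum_space :: (complex^('k \<times> 'l)) set)"
    using dim_sum_space_ge[where 'k = 'k and 'l = 'l] assms(1) by simp
  also have "\<dots> \<le> vec.dim {f :: complex^('k \<times> 'l). berezin u f = f}"
    using fixes_E by (intro vec.dim_subset) auto
  finally show "vec.dim {f :: complex^('k \<times> 'l). berezin u f = f} \<ge> 2 * CARD('k) - 1" .
qed

end
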